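(* Let $b\ge1$, $1\le a\le b$, $t\ge0$ be integers and $d=2t+1$. Let $\nu=\nu^{\text{on-diag}}+\nu^{\text{off-diag}}$, where $\nu^{\text{on-diag}}$ is the number of pairs $(k,q)$ with $k$ odd, $1\le k<d$, $0\le q\le k$, $q\equiv0\pmod{2b}$, and $\nu^{\text{off-diag}}$ is the number of pairs $(k,q)$ with $k$ odd, $1\le k<d$, $-k\le q\le k$, $q\equiv2a-1\pmod{2b}$. Then $\nu=\tfrac{3}{2b}t^2+\tfrac{2+b}{2b}t+\tfrac{2a(a-b-1)+b+1}{2b}+c$, where $c=\tfrac{1}{2b}\Big([t+1-a]_b^2+\big(b-2-2[t-a]_b\big)[t+1-a]_b+[a+t]_b\big(b-2-2[a+t-1]_b+[a+t]_b\big)+[t]_b^2+\big(b-1-2[t-\tfrac12]_b\big)[t]_b\Big)$, and $0\le c\le 3b$.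
   Context: For real $x$ and positive integer $y$, $[x]_y:=x\bmod y=x-y\lfloor x/y\rfloor$. The quantity $\nu$ is the number of quadratic Knill–Laflamme conditions a real $(\mathsf{BD}_{2b},\delta_a)$-covariant spin code must satisfy to have distance $d$. *)

theory Defs
  imports Complex_Main
begin

definition rmod :: "real \<Rightarrow> int \<Rightarrow> real" where
  "rmod x y = x - of_int y * of_int \<lfloor>x / of_int y\<rfloor>"

definition nu_on :: "int \<Rightarrow> int \<Rightarrow> nat" where
  "nu_on b d = card {(k :: int, q :: int). odd k \<and> 1 \<le> k \<and> k < d \<and> 0 \<le> q \<and> q \<le> k
                     \<and> q mod (2 * b) = 0}"

definition nu_off :: "int \<Rightarrow> int \<Rightarrow> int \<Rightarrow> nat" where
  "nu_off a b d = card {(k :: int, q :: int). odd k \<and> 1 \<le> k \<and> k < d \<and> -k \<le> q \<and> q \<le> k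
                     \<and> q mod (2 * b) = (2 * a - 1) mod (2 * b)}"

definition nu :: "int \<Rightarrow> int \<Rightarrow> int \<Rightarrow> nat" where
  "nu a b d = nu_on b d + nu_off a b d"

definition c_corr :: "int \<Rightarrow> int \<Rightarrow> int \<Rightarrow> real" where
  "c_corr a b t = (1 / (2 * of_int b)) *
     ( (rmod (of_int (t + 1 - a)) b)\<^sup>2
     + (of_int b - 2 - 2 * rmod (of_int (t - a)) b) * rmod (of_int (t + 1 - a)) b
     + rmod (of_int (a + t)) b * (of_int b - 2 - 2 * rmod (of_int (a + t - 1)) b + rmod (of_int (a + t)) b)
     + (rmod (of_int t) b)\<^sup>2
     + (of_int b - 1 - 2 * rmod (of_int t - 1 / 2) b) * rmod (of_int t) b )"

end

theory Submission
  imports Defs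
begin

text \<open>The odd row \<open>k = 2n + 1\<close> contains \<open>\<lfloor>n/b\<rfloor> + 1\<close> on-diagonal and
  \<open>\<lfloor>(n+1-a)/b\<rfloor> + \<lfloor>(n+a)/b\<rfloor> + 1\<close> off-diagonal pairs. Sums of \<open>\<lfloor>(n+s)/b\<rfloor>\<close> over
  \<open>n < t\<close> telescope against \<open>F(m) = m(m-b) + [m]\<^sub>b(b - [m]\<^sub>b)\<close>, which satisfies
  \<open>F(m+1) - F(m) = 2b\<lfloor>m/b\<rfloor>\<close>. The polynomial parts of \<open>F\<close> give the quadratic in \<open>t\<close>,
  the parts \<open>[m]\<^sub>b(b - [m]\<^sub>b) \<in> [0, b\<^sup>2]\<close> give \<open>2bc\<close>: each summand of \<open>c\<close> collapses
  to such a product because \<open>[m+1]\<^sub>b\<close> is either \<open>[m]\<^sub>b + 1\<close> or \<open>0\<close>.\<close>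

lemma le_div_iff_mult_le_int:
  fixes k x m :: int
  assumes "m > 0"
  shows "k \<le> x div m \<longleftrightarrow> k * m \<le> x"
proof
  assume "k \<le> x div m"
  then have "k * m \<le> x div m * m" using assms by simp
  also have "\<dots> \<le> x" using assms div_mult_mod_eq[of x m] pos_mod_sign[of m x] by linarith
  finally show "k * m \<le> x" .
next
  assume "k * m \<le> x"
  then have "k * m div m \<le> x div m" using assms by (intro zdiv_mono1) auto
  then show "k \<le> x div m" using assms by simp
qed

lemma minus_minus_one_div_int:
  fixes x m :: int
  assumes "m > 0"
  shows "(- x - 1) div m = - (x div m) - 1"
proof -
  have "- x - 1 = (m - 1 - x mod m) + (- (x div m) - 1) * m"
    by (simp add: algebra_simps minus_mod_eq_mult_div [symmetric])
  then have "(- x - 1) div m = ((m - 1 - x mod m) + (- (x div m) - 1) * m) div m"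
    by (rule arg_cong)
  also have "\<dots> = (- (x div m) - 1) + (m - 1 - x mod m) div m"
    by (rule div_mult_self1) (use assms in simp)
  also have "(m - 1 - x mod m) div m = 0"
    using assms pos_mod_sign[of m x] pos_mod_bound[of m x]
    by (intro div_pos_pos_trivial) linarith+
  finally show ?thesis by simp
qed

lemma mod_plus_one_cases_int:
  fixes x b :: int
  assumes "b > 0"
  obtains "(x + 1) mod b = x mod b + 1"
        | "x mod b = b - 1" and "(x + 1) mod b = 0"
proof (cases "x mod b + 1 = b")
  case True
  then have "(x mod b + 1) mod b = 0" by simp
  then have "(x + 1) mod b = 0" by (simp only: mod_add_left_eq)
  with True that show ?thesis by simp
next
  case False
  then have "(x mod b + 1) mod b = x mod b + 1"
    using assms pos_mod_bound[of b x] pos_mod_sign[of b x]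
    by (intro mod_pos_pos_trivial) linarith+
  then have "(x + 1) mod b = x mod b + 1" by (simp only: mod_add_left_eq)
  with that show ?thesis by simp
qed

lemma card_mod_eq_interval_int:
  fixes m e L U :: int
  assumes m: "m > 0" and "L \<le> U + 1"
  shows "int (card {q. L \<le> q \<and> q \<le> U \<and> q mod m = e mod m})
           = (U - e) div m + (e - L) div m + 1"
proof -
  define lo hi where "lo = - ((e - L) div m)" and "hi = (U - e) div m"
  have lower: "L \<le> e + j * m \<longleftrightarrow> lo \<le> j" for j
    using le_div_iff_mult_le_int[OF m, of "- j" "e - L"] unfolding lo_def by linarith
  have upper: "e + j * m \<le> U \<longleftrightarrow> j \<le> hi" for j
    using le_div_iff_mult_le_int[OF m, of j "U - e"] unfolding hi_def by linarith
  have "{q. L \<le> q \<and> q \<le> U \<and> q mod m = e mod m} = (\<lambda>j. e + j * m) ` {lo..hi}"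
  proof (intro set_eqI iffI)
    fix q assume "q \<in> {q. L \<le> q \<and> q \<le> U \<and> q mod m = e mod m}"
    then have q: "L \<le> q" "q \<le> U" "m dvd q - e" by (auto simp: mod_eq_dvd_iff)
    define j where "j = (q - e) div m"
    have qj: "e + j * m = q" using q(3) unfolding j_def by simp
    have "j \<in> {lo..hi}" using q(1,2) lower[of j] upper[of j] unfolding qj by simp
    with qj show "q \<in> (\<lambda>j. e + j * m) ` {lo..hi}" by blast
  next
    fix q assume "q \<in> (\<lambda>j. e + j * m) ` {lo..hi}"
    with lower upper show "q \<in> {q. L \<le> q \<and> q \<le> U \<and> q mod m = e mod m}" by auto
  qed
  moreover have "inj_on (\<lambda>j. e + j * m) {lo..hi}" using m by (auto simp: inj_on_def)
  moreover have "lo - 1 \<le> hi"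
  proof -
    have "(- (e - L) - 1) div m \<le> hi" unfolding hi_def using assms by (intro zdiv_mono1) auto
    then show ?thesis unfolding lo_def minus_minus_one_div_int[OF m] .
  qed
  ultimately show ?thesis by (simp add: card_image lo_def hi_def)
qed

lemma card_pairs_odd_rows:
  fixes P :: "int \<Rightarrow> int \<Rightarrow> bool" and t :: nat
  assumes "\<And>k. finite {q. P k q}"
  shows "card {(k, q). odd k \<and> 1 \<le> k \<and> k < 2 * int t + 1 \<and> P k q}
           = (\<Sum>n<t. card {q. P (2 * int n + 1) q})"
proof -
  define row where "row n = 2 * int n + 1" for n
  have rows: "{k. odd k \<and> 1 \<le> k \<and> k < 2 * int t + 1} = row ` {..<t}"
  proof (intro set_eqI iffI)
    fix k :: int assume k: "k \<in> {k. odd k \<and> 1 \<le> k \<and> k < 2 * int t + 1}"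
    then have "k = row (nat ((k - 1) div 2))" unfolding row_def by (auto elim!: oddE)
    moreover have "nat ((k - 1) div 2) < t" using k by auto
    ultimately show "k \<in> row ` {..<t}" by blast
  qed (auto simp: row_def)
  have "{(k, q). odd k \<and> 1 \<le> k \<and> k < 2 * int t + 1 \<and> P k q}
          = (SIGMA k : row ` {..<t}. {q. P k q})"
    by (auto simp flip: rows)
  then have "card {(k, q). odd k \<and> 1 \<le> k \<and> k < 2 * int t + 1 \<and> P k q}
               = (\<Sum>k \<in> row ` {..<t}. card {q. P k q})"
    using assms by simp
  also have "\<dots> = (\<Sum>n<t. card {q. P (row n) q})"
    by (rule sum.reindex_cong[of row]) (auto simp: inj_on_def row_def)
  finally show ?thesis unfolding row_def .
qed

lemma card_on_diagonal_row:
  fixes b s :: int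
  assumes "b \<ge> 1" and "s \<ge> 0"
  shows "int (card {q. 0 \<le> q \<and> q \<le> 2 * s + 1 \<and> q mod (2 * b) = 0}) = s div b + 1"
proof -
  have "int (card {q. 0 \<le> q \<and> q \<le> 2 * s + 1 \<and> q mod (2 * b) = 0 mod (2 * b)})
          = (2 * s + 1 - 0) div (2 * b) + (0 - 0) div (2 * b) + 1"
    by (rule card_mod_eq_interval_int) (use assms in auto)
  moreover have "(2 * s + 1) div (2 * b) = (2 * s + 1) div 2 div b"
    by (rule zdiv_zmult2_eq) (use assms in simp)
  ultimately show ?thesis by simp
qed

lemma card_off_diagonal_row:
  fixes a b s :: int
  assumes "b \<ge> 1" and "s \<ge> 0"
  shows "int (card {q. - (2 * s + 1) \<le> q \<and> q \<le> 2 * s + 1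
                     \<and> q mod (2 * b) = (2 * a - 1) mod (2 * b)})
           = (s + 1 - a) div b + (s + a) div b + 1"
proof -
  have "int (card {q. - (2 * s + 1) \<le> q \<and> q \<le> 2 * s + 1
                     \<and> q mod (2 * b) = (2 * a - 1) mod (2 * b)})
          = (2 * s + 1 - (2 * a - 1)) div (2 * b) + (2 * a - 1 - - (2 * s + 1)) div (2 * b) + 1"
    by (rule card_mod_eq_interval_int) (use assms in auto)
  also have "2 * s + 1 - (2 * a - 1) = 2 * (s + 1 - a)" by simp
  also have "2 * a - 1 - - (2 * s + 1) = 2 * (s + a)" by simp
  also have "2 * (s + 1 - a) div (2 * b) = (s + 1 - a) div b" by (rule div_mult_mult1) simp
  also have "2 * (s + a) div (2 * b) = (s + a) div b" by (rule div_mult_mult1) simp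
  finally show ?thesis .
qed

lemma nu_as_row_sum:
  fixes a b :: int and t :: nat
  assumes "b \<ge> 1"
  shows "int (nu a b (2 * int t + 1))
           = (\<Sum>n<t. int n div b + (int n + 1 - a) div b + (int n + a) div b + 2)"
proof -
  have on_rows: "nu_on b (2 * int t + 1)
          = (\<Sum>n<t. card {q. 0 \<le> q \<and> q \<le> 2 * int n + 1 \<and> q mod (2 * b) = 0})"
    unfolding nu_on_def
  proof (rule card_pairs_odd_rows)
    show "finite {q. 0 \<le> q \<and> q \<le> k \<and> q mod (2 * b) = 0}" for k
      by (rule finite_subset [of _ "{0..k}"]) auto
  qed
  have off_rows: "nu_off a b (2 * int t + 1)
          = (\<Sum>n<t. card {q. - (2 * int n + 1) \<le> q \<and> q \<le> 2 * int n + 1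
                              \<and> q mod (2 * b) = (2 * a - 1) mod (2 * b)})"
    unfolding nu_off_def
  proof (rule card_pairs_odd_rows)
    show "finite {q. - k \<le> q \<and> q \<le> k \<and> q mod (2 * b) = (2 * a - 1) mod (2 * b)}" for k
      by (rule finite_subset [of _ "{-k..k}"]) auto
  qed
  have "int (nu_on b (2 * int t + 1)) = (\<Sum>n<t. int n div b + 1)"
    unfolding on_rows of_nat_sum
  proof (rule sum.cong [OF refl])
    show "int (card {q. 0 \<le> q \<and> q \<le> 2 * int n + 1 \<and> q mod (2 * b) = 0})
            = int n div b + 1" for n
      by (rule card_on_diagonal_row) (use assms in auto)
  qed
  moreover have "int (nu_off a b (2 * int t + 1))
                   = (\<Sum>n<t. (int n + 1 - a) div b + (int n + a) div b + 1)"
    unfolding off_rows of_nat_sum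
  proof (rule sum.cong [OF refl])
    show "int (card {q. - (2 * int n + 1) \<le> q \<and> q \<le> 2 * int n + 1
                         \<and> q mod (2 * b) = (2 * a - 1) mod (2 * b)})
            = (int n + 1 - a) div b + (int n + a) div b + 1" for n
      by (rule card_off_diagonal_row) (use assms in auto)
  qed
  ultimately show ?thesis by (simp add: nu_def sum.distrib)
qed

definition residue_product :: "int \<Rightarrow> int \<Rightarrow> int" where
  "residue_product b m = m mod b * (b - m mod b)"

text \<open>For \<open>m \<ge> 0\<close> this equals \<open>2 * b * (\<Sum>j<m. j div b)\<close>.\<close>
definition div_sum_closed :: "int \<Rightarrow> int \<Rightarrow> int" where
  "div_sum_closed b m = m * (m - b) + residue_product b m"

lemma residue_product_bounds:
  fixes b m :: int
  assumes "b > 0"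
  shows "0 \<le> residue_product b m" and "residue_product b m \<le> b * b"
proof -
  have r: "0 \<le> m mod b" "m mod b < b" using assms by simp_all
  then show "0 \<le> residue_product b m" unfolding residue_product_def by simp
  show "residue_product b m \<le> b * b"
    unfolding residue_product_def using r by (intro mult_mono) auto
qed

lemma div_sum_closed_step:
  fixes b m :: int
  assumes "b > 0"
  shows "div_sum_closed b (m + 1) = div_sum_closed b m + 2 * b * (m div b)"
proof -
  define q r where "q = m div b" and "r = m mod b"
  have m: "m = q * b + r" unfolding q_def r_def by simp
  show ?thesis
  proof (cases rule: mod_plus_one_cases_int[OF assms, of m])
    case 1
    then show ?thesis
      unfolding div_sum_closed_def residue_product_def 1 q_def [symmetric] r_def [symmetric]
      unfolding m by algebra
  next
    case 2
    have r: "r = b - 1" using 2(1) unfolding r_def .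
    show ?thesis
      unfolding div_sum_closed_def residue_product_def 2(2) q_def [symmetric] r_def [symmetric]
      unfolding m r by algebra
  qed
qed

lemma div_sum_closed_add_period:
  "div_sum_closed b (m + b) = div_sum_closed b m + 2 * b * m"
  by (simp add: div_sum_closed_def residue_product_def algebra_simps)

lemma div_sum_closed_eq_0:
  fixes b m :: int
  assumes "0 \<le> m" and "m \<le> b"
  shows "div_sum_closed b m = 0"
proof (cases "m = b")
  case False
  with assms show ?thesis by (simp add: div_sum_closed_def residue_product_def algebra_simps)
qed (simp add: div_sum_closed_def residue_product_def)

lemma sum_div_telescope:
  fixes b s :: int
  assumes "b > 0"
  shows "2 * b * (\<Sum>n<t. (int n + s) div b) = div_sum_closed b (int t + s) - div_sum_closed b s"
proof -
  have "2 * b * ((int n + s) div b)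
          = div_sum_closed b (int (Suc n) + s) - div_sum_closed b (int n + s)" for n
  proof -
    have "div_sum_closed b (int (Suc n) + s) = div_sum_closed b ((int n + s) + 1)"
      by (simp add: add_ac)
    then show ?thesis unfolding div_sum_closed_step[OF assms] by simp
  qed
  then have "2 * b * (\<Sum>n<t. (int n + s) div b)
          = (\<Sum>n<t. div_sum_closed b (int (Suc n) + s) - div_sum_closed b (int n + s))"
    by (simp add: sum_distrib_left)
  also have "\<dots> = div_sum_closed b (int t + s) - div_sum_closed b s"
    using sum_lessThan_telescope[of "\<lambda>n. div_sum_closed b (int n + s)" t] by simp
  finally show ?thesis .
qed

lemma nu_closed_form:
  fixes a b :: int and t :: nat
  assumes b: "b \<ge> 1" and a: "1 \<le> a" "a \<le> b"
  shows "2 * b * int (nu a b (2 * int t + 1))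
           = 3 * int t ^ 2 + (2 + b) * int t + (2 * a * (a - b - 1) + b + 1)
             + residue_product b (int t + 1 - a) + residue_product b (a + int t)
             + residue_product b (int t)"
proof -
  have "b > 0" using b by simp
  have row_sum: "int (nu a b (2 * int t + 1))
      = (\<Sum>n<t. (int n + 0) div b) + (\<Sum>n<t. (int n + (1 - a)) div b)
        + (\<Sum>n<t. (int n + a) div b) + 2 * int t"
    unfolding nu_as_row_sum[OF b] by (simp add: sum.distrib add_diff_eq)
  have "2 * b * int (nu a b (2 * int t + 1))
      = (div_sum_closed b (int t + 0) - div_sum_closed b 0)
        + (div_sum_closed b (int t + (1 - a)) - div_sum_closed b (1 - a))
        + (div_sum_closed b (int t + a) - div_sum_closed b a) + 2 * b * (2 * int t)"
    unfolding row_sum distrib_left sum_div_telescope[OF \<open>b > 0\<close>] by (rule refl)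
  moreover have "div_sum_closed b (1 - a) = 2 * b * (a - 1)"
    using div_sum_closed_add_period[of b "1 - a"] div_sum_closed_eq_0[of "1 - a + b" b] a
    by (simp add: algebra_simps)
  moreover have "div_sum_closed b 0 = 0" and "div_sum_closed b a = 0"
    using a by (simp_all add: div_sum_closed_eq_0)
  ultimately show ?thesis
    by (simp add: div_sum_closed_def algebra_simps power2_eq_square)
qed

lemma rmod_of_int: "rmod (of_int x) b = of_int (x mod b)"
proof -
  have "rmod (of_int x) b = of_int (x - b * (x div b))"
    by (simp add: rmod_def floor_divide_of_int_eq)
  then show ?thesis by (simp only: minus_mult_div_eq_mod)
qed

lemma rmod_of_int_minus_half:
  fixes t b :: int
  assumes "b > 0"
  shows "rmod (of_int t - 1 / 2) b = of_int ((t - 1) mod b) + 1 / 2"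
proof -
  have "\<lfloor>of_int t - 1 / 2 :: real\<rfloor> = t - 1" by (rule floor_unique) auto
  then have "\<lfloor>(of_int t - 1 / 2) / of_int b :: real\<rfloor> = (t - 1) div b"
    using assms by (simp add: floor_divide_real_eq_div)
  then have "rmod (of_int t - 1 / 2) b = of_int ((t - 1) - b * ((t - 1) div b)) + 1 / 2"
    by (simp add: rmod_def)
  then show ?thesis by (simp only: minus_mult_div_eq_mod)
qed

lemma residue_product_succ:
  fixes x y b :: int
  assumes "b > 0" and "y = x + 1"
  shows "(real_of_int (y mod b))\<^sup>2 + (of_int b - 2 - 2 * of_int (x mod b)) * of_int (y mod b)
           = of_int (residue_product b y)"
  by (cases rule: mod_plus_one_cases_int[OF assms(1), of x])
     (simp_all add: assms(2) residue_product_def power2_eq_square algebra_simps)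

lemma c_corr_eq_residue_products:
  fixes a b t :: int
  assumes "b > 0"
  shows "c_corr a b t = of_int (residue_product b (t + 1 - a) + residue_product b (a + t)
                                + residue_product b t) / (2 * of_int b)"
proof -
  have "(real_of_int ((t + 1 - a) mod b))\<^sup>2
          + (of_int b - 2 - 2 * of_int ((t - a) mod b)) * of_int ((t + 1 - a) mod b)
        + of_int ((a + t) mod b)
          * (of_int b - 2 - 2 * of_int ((a + t - 1) mod b) + of_int ((a + t) mod b))
        + (of_int (t mod b))\<^sup>2
          + (of_int b - 1 - 2 * (of_int ((t - 1) mod b) + 1 / 2)) * of_int (t mod b)
        = of_int (residue_product b (t + 1 - a) + residue_product b (a + t)
                  + residue_product b t)"
    using residue_product_succ[OF assms, of "t + 1 - a" "t - a"]
      residue_product_succ[OF assms, of "a + t" "a + t - 1"]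
      residue_product_succ[OF assms, of t "t - 1"]
    by (simp add: algebra_simps power2_eq_square)
  then show ?thesis
    unfolding c_corr_def rmod_of_int rmod_of_int_minus_half[OF assms] by simp
qed

lemma c_corr_bounds:
  fixes a b t :: int
  assumes "b > 0"
  shows "0 \<le> c_corr a b t" and "c_corr a b t \<le> 3 * of_int b / 2"
proof -
  define S where "S = residue_product b (t + 1 - a) + residue_product b (a + t) + residue_product b t"
  have "0 \<le> S" and "S \<le> 3 * (b * b)"
    unfolding S_def using residue_product_bounds[OF assms, of "t + 1 - a"]
      residue_product_bounds[OF assms, of "a + t"] residue_product_bounds[OF assms, of t]
    by linarith+
  then have S_nonneg: "0 \<le> real_of_int S" and "real_of_int S \<le> of_int (3 * (b * b))"
    by (simp_all only: of_int_0_le_iff of_int_le_iff)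
  then have S_le: "real_of_int S \<le> 3 * (of_int b * of_int b)" by simp
  have c: "c_corr a b t = of_int S / (2 * of_int b)"
    unfolding S_def by (rule c_corr_eq_residue_products[OF assms])
  show "0 \<le> c_corr a b t" unfolding c using S_nonneg assms by simp
  have "c_corr a b t \<le> 3 * (of_int b * of_int b) / (2 * of_int b)"
    unfolding c using S_le assms by (intro divide_right_mono) simp_all
  also have "\<dots> = 3 * of_int b / 2" using assms by simp
  finally show "c_corr a b t \<le> 3 * of_int b / 2" .
qed

lemma nu_real_closed_form:
  fixes a b t :: int
  assumes "b \<ge> 1" and "1 \<le> a" and "a \<le> b" and "t \<ge> 0"
  shows "2 * of_int b * real (nu a b (2 * t + 1))
           = 3 * (of_int t)\<^sup>2 + (2 + of_int b) * of_int t
             + (2 * of_int a * (of_int a - of_int b - 1) + of_int b + 1)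
             + 2 * of_int b * c_corr a b t"
proof -
  obtain n :: nat where t: "t = int n" using \<open>t \<ge> 0\<close> nonneg_int_cases by blast
  have "real_of_int (2 * b * int (nu a b (2 * t + 1)))
          = of_int (3 * t\<^sup>2 + (2 + b) * t + (2 * a * (a - b - 1) + b + 1)
                    + (residue_product b (t + 1 - a) + residue_product b (a + t)
                       + residue_product b t))"
    using nu_closed_form[of b a n] assms unfolding t by (simp add: add.assoc)
  moreover have "2 * of_int b * c_corr a b t
          = of_int (residue_product b (t + 1 - a) + residue_product b (a + t) + residue_product b t)"
    using c_corr_eq_residue_products[of b a t] assms by simp
  ultimately show ?thesis by simp
qed

theorem theoremS3:
  fixes a b t d :: int
  assumes "b \<ge> 1" and "1 \<le> a" and "a \<le> b" and "t \<ge> 0" and "d = 2 * t + 1"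
  shows "real (nu a b d) =
           3 / (2 * of_int b) * (of_int t)\<^sup>2 + (2 + of_int b) / (2 * of_int b) * of_int t
           + (2 * of_int a * (of_int a - of_int b - 1) + of_int b + 1) / (2 * of_int b)
           + c_corr a b t
         \<and> 0 \<le> c_corr a b t \<and> c_corr a b t \<le> 3 * of_int b"
proof (intro conjI)
  have b: "real_of_int b > 0" using \<open>b \<ge> 1\<close> by simp
  have "real (nu a b d)
          = (3 * (of_int t)\<^sup>2 + (2 + of_int b) * of_int t
             + (2 * of_int a * (of_int a - of_int b - 1) + of_int b + 1)) / (2 * of_int b)
            + c_corr a b t"
    using nu_real_closed_form[of b a t] assms b by (simp add: field_simps)
  then show "real (nu a b d) =
           3 / (2 * of_int b) * (of_int t)\<^sup>2 + (2 + of_int b) / (2 * of_int b) * of_int t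
           + (2 * of_int a * (of_int a - of_int b - 1) + of_int b + 1) / (2 * of_int b)
           + c_corr a b t"
    by (rule trans) (use b in \<open>simp add: field_simps\<close>)
  show "0 \<le> c_corr a b t" using c_corr_bounds(1)[of b] assms by simp
  show "c_corr a b t \<le> 3 * of_int b" using c_corr_bounds(2)[of b a t] assms b by simp
qed

end
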